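(* If $\mathsf{A}=(A_1,\dots,A_N)\in GL_2(\mathbb{R})^N$ is dominated, then the closure of $\{cA_{\mathtt{i}}: c\in\mathbb{R},\ \mathtt{i}\in\Sigma_*\}$ in the space of $2\times2$ matrices contains no non-zero nilpotent matrix. Equivalently, every rank-one matrix in this closure is a non-zero scalar multiple of a (not necessarily orthogonal) projection, i.e. of a rank-one idempotent.
   Context: For a finite word $\mathtt{i}=i_1\cdots i_n$, $A_{\mathtt{i}}=A_{i_1}\cdots A_{i_n}$ and $|\mathtt{i}|=n$; $\Sigma_*$ is the set of all finite words. $\alpha_1(A)\ge\alpha_2(A)$ are singular values. $\mathsf{A}$ is dominated if there are $C>0$ and $0<\tau<1$ with $\alpha_2(A_{\mathtt{i}})\le C\tau^{|\mathtt{i}|}\alpha_1(A_{\mathtt{i}})$ for all $\mathtt{i}\in\Sigma_*$. *)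

theory Defs
  imports "HOL-Analysis.Analysis"
begin

definition word_prod :: "('n \<Rightarrow> real^'d^'d) \<Rightarrow> 'n list \<Rightarrow> real^'d^'d" where
  "word_prod A w = foldr (\<lambda>j M. A j ** M) w (mat 1)"

definition gram_eigenvalues :: "real^'d^'d \<Rightarrow> real set" where
  "gram_eigenvalues A = {e. \<exists>v. v \<noteq> 0 \<and> (transpose A ** A) *v v = e *\<^sub>R v}"

definition sv1 :: "real^2^2 \<Rightarrow> real" where
  "sv1 A = sqrt (Max (gram_eigenvalues A))"

definition sv2 :: "real^2^2 \<Rightarrow> real" where
  "sv2 A = sqrt (Min (gram_eigenvalues A))"

definition dominated :: "('n \<Rightarrow> real^2^2) \<Rightarrow> bool" where
  "dominated A \<longleftrightarrow> (\<exists>C>0. \<exists>\<tau>. 0 < \<tau> \<and> \<tau> < 1 \<and>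
     (\<forall>w. sv2 (word_prod A w) \<le> C * \<tau> ^ length w * sv1 (word_prod A w)))"

definition mat_pow :: "real^'d^'d \<Rightarrow> nat \<Rightarrow> real^'d^'d" where
  "mat_pow M k = (((**) M) ^^ k) (mat 1)"

definition nilpotent_mat :: "real^'d^'d \<Rightarrow> bool" where
  "nilpotent_mat M \<longleftrightarrow> (\<exists>k. mat_pow M k = 0)"

end

(*
  If the ratio
  sv2/sv1 decays exponentially along a chain of products, their most contracted directions converge
  exponentially fast; consequently a vector whose images become negligible relative to the norms
  of the products is contracted at a uniform exponential rate.

  Suppose a nonzero nilpotent N is a limit of scaled products c_k A_(w_k). The lengths of the w_k
  must diverge, since otherwise N would be a multiple of an invertible matrix. A diagonal argument
  yields a bi-infinite word whose forward blocks are suffixes and whose backward blocks are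
  prefixes of the w_k, and a vector spanning ker N = im N is contracted both by the forward
  products and by the inverses of the backward products along it. Combining the two exponential
  estimates squares the domination rate; iterating, sv2/sv1 of long blocks would decay faster
  than the n-th power of the smallest ratio of a single generator, which is impossible.
  Finally a rank-one M satisfies M ** M = trace M *R M, so it is a nonzero multiple of an
  idempotent unless it is nilpotent.
*)

theory Submission
  imports Defs
begin

section \<open>Plane geometry\<close>

lemma norm_vec2_square: "(norm (x::real^2))\<^sup>2 = (x$1)\<^sup>2 + (x$2)\<^sup>2"
  by (simp add: norm_vec_def L2_set_def UNIV_2 power2_eq_square)

lemma inner_vec2: "inner (x::real^2) y = x$1 * y$1 + x$2 * y$2"
  by (simp add: inner_vec_def UNIV_2)

lemma vec2_eq_iff: "(x::'a^2) = y \<longleftrightarrow> x$1 = y$1 \<and> x$2 = y$2"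
  by (simp add: vec_eq_iff forall_2)

lemma mat2_eq_iff:
  "(X::'a^2^2) = Y \<longleftrightarrow> X$1$1 = Y$1$1 \<and> X$1$2 = Y$1$2 \<and> X$2$1 = Y$2$1 \<and> X$2$2 = Y$2$2"
  by (simp add: vec_eq_iff forall_2)

lemma matrix_matrix_mult_2:
  "(G::real^2^2) ** H = (\<chi> i j. G$i$1 * H$1$j + G$i$2 * H$2$j)"
  by (simp add: matrix_matrix_mult_def sum_2)

definition perp :: "real^2 \<Rightarrow> real^2" where
  "perp x = (\<chi> i. if i = 1 then - x$2 else x$1)"

lemma perp_nth [simp]: "perp x $ 1 = - x$2" "perp x $ 2 = x$1"
  by (simp_all add: perp_def)

lemma inner_perp_self [simp]: "inner x (perp x) = 0" "inner (perp x) x = 0"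
  by (simp_all add: inner_vec2 algebra_simps)

lemma norm_perp [simp]: "norm (perp x) = norm x"
proof -
  have "(norm (perp x))\<^sup>2 = (norm x)\<^sup>2" by (simp add: norm_vec2_square algebra_simps)
  thus ?thesis by (simp add: power2_eq_iff_nonneg)
qed

lemma unit_vec2_decomp:
  assumes "norm s = 1"
  shows "x = inner x s *\<^sub>R s + inner x (perp s) *\<^sub>R perp s"
proof -
  have "(s$1)\<^sup>2 + (s$2)\<^sup>2 = 1" using assms norm_vec2_square[of s] by simp
  thus ?thesis unfolding vec2_eq_iff by (simp add: inner_vec2 power2_eq_square) algebra
qed

lemma unit_vec2_norm_square:
  assumes "norm s = 1"
  shows "(norm x)\<^sup>2 = (inner x s)\<^sup>2 + (inner x (perp s))\<^sup>2"
proof -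
  have "inner s s = 1" "inner (perp s) (perp s) = 1"
    using assms by (simp_all add: dot_square_norm)
  thus ?thesis
    unfolding power2_norm_eq_inner
    by (subst (1 2) unit_vec2_decomp[OF assms, of x])
       (simp add: inner_add_left inner_add_right inner_commute power2_eq_square)
qed

text \<open>For unit vectors a and b, sin_dist a b is the absolute sine of the angle between the
  lines they span.\<close>
definition sin_dist :: "real^2 \<Rightarrow> real^2 \<Rightarrow> real" where
  "sin_dist a b = \<bar>inner a (perp b)\<bar>"

lemma sin_dist_commute: "sin_dist a b = sin_dist b a"
  by (simp add: sin_dist_def inner_vec2 algebra_simps abs_minus_commute)

lemma sin_dist_self [simp]: "sin_dist x x = 0"
  by (simp add: sin_dist_def)

lemma sin_dist_triangle:
  assumes a: "norm a = 1" and b: "norm b = 1" and c: "norm c = 1"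
  shows "sin_dist a c \<le> sin_dist a b + sin_dist b c"
proof -
  have "(b$1)\<^sup>2 + (b$2)\<^sup>2 = 1" using b norm_vec2_square[of b] by simp
  hence expand: "inner a (perp c) = inner a b * inner b (perp c) + inner a (perp b) * inner b c"
    by (simp add: inner_vec2 power2_eq_square) algebra
  have ab: "\<bar>inner a b\<bar> \<le> 1" and bc: "\<bar>inner b c\<bar> \<le> 1"
    using Cauchy_Schwarz_ineq2[of a b] Cauchy_Schwarz_ineq2[of b c] a b c by simp_all
  have "\<bar>inner a (perp c)\<bar> \<le> \<bar>inner a b\<bar> * \<bar>inner b (perp c)\<bar> + \<bar>inner a (perp b)\<bar> * \<bar>inner b c\<bar>"
    unfolding expand by (metis abs_mult abs_triangle_ineq)
  also have "\<dots> \<le> 1 * \<bar>inner b (perp c)\<bar> + \<bar>inner a (perp b)\<bar> * 1"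
    by (intro add_mono mult_mono) (use ab bc in auto)
  finally show ?thesis by (simp add: sin_dist_def sin_dist_commute[of b c])
qed

lemma quadratic_nonneg_imp_linear_coeff_zero:
  fixes a b :: real
  assumes "\<And>t. 0 \<le> 2 * t * b + t\<^sup>2 * a"
  shows "b = 0"
proof (rule ccontr)
  assume "b \<noteq> 0"
  define d where "d = \<bar>a\<bar> + 1"
  have d: "0 < d" "a / d < 1" by (simp_all add: d_def)
  have "2 * (- b / d) * b + (- b / d)\<^sup>2 * a = - (b\<^sup>2 / d) * (2 - a / d)"
    using d by (simp add: field_simps power2_eq_square)
  also have "\<dots> < 0"
  proof (intro mult_neg_pos)
    show "- (b\<^sup>2 / d) < 0" using \<open>b \<noteq> 0\<close> d by simp
    show "0 < 2 - a / d" using d by linarith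
  qed
  finally show False using assms[of "- b / d"] by simp
qed

section \<open>Singular values of 2x2 matrices\<close>

definition least_dir :: "real^2^2 \<Rightarrow> real^2" where
  "least_dir G = (SOME s. norm s = 1 \<and> (\<forall>x. norm x = 1 \<longrightarrow> norm (G *v s) \<le> norm (G *v x)))"

lemma least_dir_exists:
  "\<exists>s::real^2. norm s = 1 \<and> (\<forall>x. norm x = 1 \<longrightarrow> norm (G *v s) \<le> norm (G *v x))"
proof -
  have "continuous_on (sphere (0::real^2) 1) (\<lambda>x. norm (G *v x))"
    by (intro continuous_on_norm linear_continuous_on matrix_vector_mul_bounded_linear)
  from continuous_attains_inf[OF compact_sphere _ this] show ?thesis by auto
qed

lemma norm_least_dir [simp]: "norm (least_dir G) = 1"
  and least_dir_minimal: "norm x = 1 \<Longrightarrow> norm (G *v least_dir G) \<le> norm (G *v x)"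
  using someI_ex[OF least_dir_exists[of G]] unfolding least_dir_def[symmetric] by auto

lemma least_dir_minimal_scaled: "norm (G *v least_dir G) * norm x \<le> norm (G *v x)"
proof (cases "x = 0")
  case False
  have "norm (G *v least_dir G) \<le> norm (G *v ((1 / norm x) *\<^sub>R x))"
    using False by (intro least_dir_minimal) simp
  thus ?thesis using False by (simp add: matrix_vector_mult_scaleR pos_le_divide_eq)
qed simp

lemma least_dir_image_orthogonal: "inner (G *v least_dir G) (G *v perp (least_dir G)) = 0"
proof (rule quadratic_nonneg_imp_linear_coeff_zero)
  let ?s = "least_dir G" and ?p = "perp (least_dir G)"
  fix t :: real
  have "(norm (?s + t *\<^sub>R ?p))\<^sup>2 = 1 + t\<^sup>2"
    using unit_vec2_norm_square[OF norm_least_dir, of "?s + t *\<^sub>R ?p" G]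
    by (simp add: inner_add_left dot_square_norm power2_eq_square)
  moreover have "(norm (G *v ?s) * norm (?s + t *\<^sub>R ?p))\<^sup>2 \<le> (norm (G *v (?s + t *\<^sub>R ?p)))\<^sup>2"
    by (intro power_mono least_dir_minimal_scaled) simp
  moreover have "(norm (G *v (?s + t *\<^sub>R ?p)))\<^sup>2
      = (norm (G *v ?s))\<^sup>2 + 2 * t * inner (G *v ?s) (G *v ?p) + t\<^sup>2 * (norm (G *v ?p))\<^sup>2"
    unfolding power2_norm_eq_inner
    by (simp add: matrix_vector_right_distrib matrix_vector_mult_scaleR inner_add_left
        inner_add_right inner_commute algebra_simps power2_eq_square)
  ultimately show "0 \<le> 2 * t * inner (G *v ?s) (G *v ?p) + t\<^sup>2 * ((norm (G *v ?p))\<^sup>2 - (norm (G *v ?s))\<^sup>2)"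
    unfolding power_mult_distrib by (simp add: algebra_simps)
qed

lemma inner_gram: "inner ((transpose G ** G) *v v) x = inner (G *v v) (G *v (x::real^'n))"
  unfolding matrix_vector_mul_assoc[symmetric] transpose_matrix_vector by (rule dot_lmul_matrix)

lemma gram_least_dir:
  "(transpose G ** G) *v least_dir G = (norm (G *v least_dir G))\<^sup>2 *\<^sub>R least_dir G"
proof -
  let ?z = "(transpose G ** G) *v least_dir G"
  have "?z = inner ?z (least_dir G) *\<^sub>R least_dir G + inner ?z (perp (least_dir G)) *\<^sub>R perp (least_dir G)"
    by (rule unit_vec2_decomp[OF norm_least_dir])
  thus ?thesis unfolding inner_gram by (simp add: least_dir_image_orthogonal power2_norm_eq_inner)
qed

lemma gram_perp_least_dir:
  "(transpose G ** G) *v perp (least_dir G) = (norm (G *v perp (least_dir G)))\<^sup>2 *\<^sub>R perp (least_dir G)"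
proof -
  let ?z = "(transpose G ** G) *v perp (least_dir G)"
  have "?z = inner ?z (least_dir G) *\<^sub>R least_dir G + inner ?z (perp (least_dir G)) *\<^sub>R perp (least_dir G)"
    by (rule unit_vec2_decomp[OF norm_least_dir])
  thus ?thesis unfolding inner_gram
    using least_dir_image_orthogonal[of G] by (simp add: inner_commute power2_norm_eq_inner)
qed

lemma gram_eigenvalues_2x2:
  "gram_eigenvalues G = {(norm (G *v least_dir G))\<^sup>2, (norm (G *v perp (least_dir G)))\<^sup>2}"
proof
  let ?M = "transpose G ** G" and ?s = "least_dir G" and ?p = "perp (least_dir G)"
  have sym: "inner (?M *v x) y = inner x (?M *v y)" for x y
    by (metis inner_gram inner_commute)
  show "gram_eigenvalues G \<subseteq> {(norm (G *v ?s))\<^sup>2, (norm (G *v ?p))\<^sup>2}"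
  proof
    fix e assume "e \<in> gram_eigenvalues G"
    then obtain v where v: "v \<noteq> 0" "?M *v v = e *\<^sub>R v"
      by (auto simp: gram_eigenvalues_def)
    have "e * inner v ?s = (norm (G *v ?s))\<^sup>2 * inner v ?s"
      using sym[of v ?s] v(2) by (simp add: gram_least_dir)
    moreover have "e * inner v ?p = (norm (G *v ?p))\<^sup>2 * inner v ?p"
      using sym[of v ?p] v(2) by (simp add: gram_perp_least_dir)
    moreover have "inner v ?s \<noteq> 0 \<or> inner v ?p \<noteq> 0"
      using unit_vec2_decomp[OF norm_least_dir, of v G] v(1) by auto
    ultimately show "e \<in> {(norm (G *v ?s))\<^sup>2, (norm (G *v ?p))\<^sup>2}" by auto
  qed
  have "?s \<noteq> 0" "?p \<noteq> 0" using norm_least_dir[of G] norm_perp[of ?s] by (metis norm_zero zero_neq_one)+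
  then show "{(norm (G *v ?s))\<^sup>2, (norm (G *v ?p))\<^sup>2} \<subseteq> gram_eigenvalues G"
    unfolding gram_eigenvalues_def using gram_least_dir gram_perp_least_dir by blast
qed

lemma least_dir_le_perp: "norm (G *v least_dir G) \<le> norm (G *v perp (least_dir G))"
  by (rule least_dir_minimal) simp

lemma sv1_eq: "sv1 G = norm (G *v perp (least_dir G))"
  using least_dir_le_perp[of G]
  by (simp add: sv1_def gram_eigenvalues_2x2 max_def power_mono)

lemma sv2_eq: "sv2 G = norm (G *v least_dir G)"
  using least_dir_le_perp[of G]
  by (simp add: sv2_def gram_eigenvalues_2x2 min_def power_mono)

lemma sv1_nonneg: "0 \<le> sv1 G" and sv2_nonneg: "0 \<le> sv2 G"
  by (simp_all add: sv1_eq sv2_eq)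

lemma sv2_le_sv1: "sv2 G \<le> sv1 G"
  by (simp add: sv1_eq sv2_eq least_dir_le_perp)

lemma sv2_mult_norm_le: "sv2 G * norm x \<le> norm (G *v x)"
  unfolding sv2_eq by (rule least_dir_minimal_scaled)

lemma norm_mv_square:
  "(norm (G *v x))\<^sup>2 = (inner x (least_dir G))\<^sup>2 * (sv2 G)\<^sup>2 + (inner x (perp (least_dir G)))\<^sup>2 * (sv1 G)\<^sup>2"
proof -
  let ?s = "least_dir G" and ?p = "perp (least_dir G)"
  have "G *v x = inner x ?s *\<^sub>R (G *v ?s) + inner x ?p *\<^sub>R (G *v ?p)"
    by (subst unit_vec2_decomp[OF norm_least_dir, of x])
       (simp add: matrix_vector_right_distrib matrix_vector_mult_scaleR)
  thus ?thesis
    unfolding sv1_eq sv2_eq power2_norm_eq_inner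
    using least_dir_image_orthogonal[of G]
    by (simp add: inner_add_left inner_add_right inner_commute power2_eq_square algebra_simps)
qed

lemma norm_mv_le_sv1: "norm (G *v x) \<le> sv1 G * norm x"
proof -
  let ?a = "(inner x (least_dir G))\<^sup>2" and ?b = "(inner x (perp (least_dir G)))\<^sup>2"
  have "?a * (sv2 G)\<^sup>2 \<le> ?a * (sv1 G)\<^sup>2"
    by (intro mult_left_mono power_mono sv2_le_sv1 sv2_nonneg) simp
  hence "(norm (G *v x))\<^sup>2 \<le> (?a + ?b) * (sv1 G)\<^sup>2"
    unfolding norm_mv_square by (simp add: algebra_simps)
  also have "\<dots> = (sv1 G * norm x)\<^sup>2"
    using unit_vec2_norm_square[OF norm_least_dir, of x G] by (simp add: power_mult_distrib)
  finally show ?thesis by (rule power2_le_imp_le) (simp add: sv1_nonneg)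
qed

lemma sv1_eqI:
  assumes "norm y = 1" "norm (G *v y) = m" "\<And>x. norm x = 1 \<Longrightarrow> norm (G *v x) \<le> m"
  shows "sv1 G = m"
  using assms(3)[of "perp (least_dir G)"] norm_mv_le_sv1[of G y] assms(1,2)
  by (simp add: sv1_eq)

lemma sv2_eqI:
  assumes "norm y = 1" "norm (G *v y) = m" "\<And>x. norm x = 1 \<Longrightarrow> m \<le> norm (G *v x)"
  shows "sv2 G = m"
  using assms(3)[of "least_dir G"] least_dir_minimal[OF assms(1), of G] assms(2)
  by (simp add: sv2_eq)

lemma sv1_mult_le: "sv1 (A ** B) \<le> sv1 A * sv1 B"
proof -
  let ?x = "perp (least_dir (A ** B))"
  have "sv1 (A ** B) = norm (A *v (B *v ?x))"
    by (simp add: sv1_eq matrix_vector_mul_assoc)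
  also have "\<dots> \<le> sv1 A * norm (B *v ?x)" by (rule norm_mv_le_sv1)
  also have "\<dots> \<le> sv1 A * sv1 B"
    using norm_mv_le_sv1[of B ?x] by (simp add: mult_left_mono sv1_nonneg)
  finally show ?thesis .
qed

lemma sv2_mult_ge: "sv2 A * sv2 B \<le> sv2 (A ** B)"
proof -
  let ?x = "least_dir (A ** B)"
  have "sv2 A * sv2 B \<le> sv2 A * norm (B *v ?x)"
    using sv2_mult_norm_le[of B ?x] by (simp add: mult_left_mono sv2_nonneg)
  also have "\<dots> \<le> norm (A *v (B *v ?x))" by (rule sv2_mult_norm_le)
  also have "\<dots> = sv2 (A ** B)" by (simp add: sv2_eq matrix_vector_mul_assoc)
  finally show ?thesis .
qed

lemma sv1_scaleR: "sv1 (c *\<^sub>R G) = \<bar>c\<bar> * sv1 G"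
proof (rule sv1_eqI[of "perp (least_dir G)"])
  show "norm (perp (least_dir G)) = 1" by simp
  show "norm ((c *\<^sub>R G) *v perp (least_dir G)) = \<bar>c\<bar> * sv1 G"
    by (simp add: sv1_eq scaleR_matrix_vector_assoc[symmetric])
  show "norm ((c *\<^sub>R G) *v x) \<le> \<bar>c\<bar> * sv1 G" if "norm x = 1" for x
    using norm_mv_le_sv1[of G x] that
    by (simp add: scaleR_matrix_vector_assoc[symmetric] mult_left_mono)
qed

lemma sv1_mult_sin_dist_le: "sv1 G * sin_dist x (least_dir G) \<le> norm (G *v x)"
proof -
  have "(sv1 G * sin_dist x (least_dir G))\<^sup>2 \<le> (norm (G *v x))\<^sup>2"
    unfolding norm_mv_square sin_dist_def by (simp add: power_mult_distrib mult.commute)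
  thus ?thesis by (rule power2_le_imp_le) simp
qed

lemma norm_mv_le_sin_dist:
  assumes "norm x = 1"
  shows "norm (G *v x) \<le> sv2 G + sv1 G * sin_dist x (least_dir G)"
proof -
  let ?a = "sv2 G * \<bar>inner x (least_dir G)\<bar>" and ?b = "sv1 G * sin_dist x (least_dir G)"
  have "(norm (G *v x))\<^sup>2 = ?a\<^sup>2 + ?b\<^sup>2"
    unfolding norm_mv_square sin_dist_def by (simp add: power_mult_distrib mult.commute)
  also have "\<dots> \<le> (?a + ?b)\<^sup>2"
    by (simp add: power2_sum sv1_nonneg sv2_nonneg sin_dist_def)
  finally have "norm (G *v x) \<le> ?a + ?b"
    by (rule power2_le_imp_le) (simp add: sv1_nonneg sv2_nonneg sin_dist_def)
  moreover have "?a \<le> sv2 G"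
    using Cauchy_Schwarz_ineq2[of x "least_dir G"] assms
    by (simp add: mult_left_le sv2_nonneg)
  ultimately show ?thesis by linarith
qed

lemma matrix_inv_left: "invertible A \<Longrightarrow> matrix_inv A ** A = mat 1"
  and matrix_inv_right: "invertible A \<Longrightarrow> A ** matrix_inv A = mat 1"
  unfolding matrix_inv_def invertible_def by (metis (mono_tags, lifting) someI_ex)+

lemma invertible_matrix_inv: "invertible A \<Longrightarrow> invertible (matrix_inv A)"
  using matrix_inv_left matrix_inv_right invertible_def by blast

lemma matrix_inv_unique:
  fixes G :: "'a::field^'n^'n"
  assumes "invertible G" "H ** G = mat 1"
  shows "H = matrix_inv G"
  by (metis assms matrix_inv_right matrix_mul_assoc matrix_mul_lid matrix_mul_rid)

lemma matrix_inv_mult: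
  fixes A B :: "'a::field^'n^'n"
  assumes "invertible A" "invertible B"
  shows "matrix_inv (A ** B) = matrix_inv B ** matrix_inv A"
proof -
  have "(matrix_inv B ** matrix_inv A) ** (A ** B) = matrix_inv B ** ((matrix_inv A ** A) ** B)"
    by (simp add: matrix_mul_assoc)
  also have "\<dots> = mat 1" using assms by (simp add: matrix_inv_left)
  finally show ?thesis
    by (intro matrix_inv_unique[symmetric] invertible_mult assms)
qed

lemma matrix_inv_mv_cancel: "invertible G \<Longrightarrow> matrix_inv G *v (G *v x) = x"
  and mv_matrix_inv_cancel: "invertible G \<Longrightarrow> G *v (matrix_inv G *v x) = x"
  by (simp_all add: matrix_vector_mul_assoc matrix_inv_left matrix_inv_right)

lemma sv2_pos: assumes "invertible G" shows "0 < sv2 G"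
proof -
  have "G *v least_dir G \<noteq> 0"
    using matrix_inv_mv_cancel[OF assms, of "least_dir G"] norm_least_dir[of G] by force
  thus ?thesis by (simp add: sv2_eq)
qed

lemma sv1_pos: "invertible G \<Longrightarrow> 0 < sv1 G"
  using sv2_pos sv2_le_sv1 by (rule order_less_le_trans)

lemma sv1_matrix_inv: assumes G: "invertible G" shows "sv1 (matrix_inv G) = 1 / sv2 G"
proof (rule sv1_eqI)
  have p: "0 < sv2 G" by (rule sv2_pos[OF G])
  show "norm ((1 / sv2 G) *\<^sub>R (G *v least_dir G)) = 1" using p by (simp add: sv2_eq)
  show "norm (matrix_inv G *v ((1 / sv2 G) *\<^sub>R (G *v least_dir G))) = 1 / sv2 G"
    by (simp add: matrix_vector_mult_scaleR matrix_inv_mv_cancel[OF G] sv2_eq)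
  show "norm (matrix_inv G *v x) \<le> 1 / sv2 G" if "norm x = 1" for x
    using sv2_mult_norm_le[of G "matrix_inv G *v x"] p that
    by (simp add: mv_matrix_inv_cancel[OF G] le_divide_eq mult.commute)
qed

lemma sv2_matrix_inv: assumes G: "invertible G" shows "sv2 (matrix_inv G) = 1 / sv1 G"
proof (rule sv2_eqI)
  have p: "0 < sv1 G" by (rule sv1_pos[OF G])
  show "norm ((1 / sv1 G) *\<^sub>R (G *v perp (least_dir G))) = 1" using p by (simp add: sv1_eq)
  show "norm (matrix_inv G *v ((1 / sv1 G) *\<^sub>R (G *v perp (least_dir G)))) = 1 / sv1 G"
    by (simp add: matrix_vector_mult_scaleR matrix_inv_mv_cancel[OF G] sv1_eq)
  show "1 / sv1 G \<le> norm (matrix_inv G *v x)" if "norm x = 1" for x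
    using norm_mv_le_sv1[of G "matrix_inv G *v x"] p that
    by (simp add: mv_matrix_inv_cancel[OF G] divide_le_eq mult.commute)
qed

definition sv_ratio :: "real^2^2 \<Rightarrow> real" where
  "sv_ratio G = sv2 G / sv1 G"

lemma sv_ratio_nonneg: "0 \<le> sv_ratio G"
  by (simp add: sv_ratio_def sv1_nonneg sv2_nonneg)

lemma sv_ratio_mat_1: "sv_ratio (mat 1 :: real^2^2) = 1"
proof -
  have "sv1 (mat 1 :: real^2^2) = 1" "sv2 (mat 1 :: real^2^2) = 1"
    by (rule sv1_eqI[of "axis 1 1"] sv2_eqI[of "axis 1 1"]; simp)+
  thus ?thesis by (simp add: sv_ratio_def)
qed

lemma sv_ratio_matrix_inv: "invertible G \<Longrightarrow> sv_ratio (matrix_inv G) = sv_ratio G"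
  using sv1_pos[of G] sv2_pos[of G]
  by (simp add: sv_ratio_def sv1_matrix_inv sv2_matrix_inv field_simps)

lemma sv_ratio_mult:
  assumes "invertible A" "invertible B"
  shows "sv_ratio A * sv_ratio B \<le> sv_ratio (A ** B)"
proof -
  have p: "0 < sv1 A" "0 < sv1 B" "0 < sv1 (A ** B)"
    using assms by (simp_all add: sv1_pos invertible_mult)
  have "sv_ratio A * sv_ratio B = (sv2 A * sv2 B) / (sv1 A * sv1 B)"
    by (simp add: sv_ratio_def)
  also have "\<dots> \<le> sv2 (A ** B) / (sv1 A * sv1 B)"
    using p by (intro divide_right_mono sv2_mult_ge) simp
  also have "\<dots> \<le> sv2 (A ** B) / sv1 (A ** B)"
    using p sv1_mult_le[of A B] by (intro divide_left_mono) (auto simp: sv2_nonneg)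
  finally show ?thesis by (simp add: sv_ratio_def)
qed

lemma div_sv1_le:
  assumes "invertible X" "invertible Y" "0 \<le> a"
  shows "a / sv1 X \<le> sv1 Y * (a / sv1 (X ** Y))"
proof -
  have p: "0 < sv1 X" "0 < sv1 Y" "0 < sv1 (X ** Y)"
    using assms by (simp_all add: sv1_pos invertible_mult)
  have "a * sv1 (X ** Y) \<le> a * (sv1 X * sv1 Y)" by (intro mult_left_mono sv1_mult_le assms(3))
  thus ?thesis using p by (simp add: field_simps)
qed

section \<open>Most contracted directions along products\<close>

lemma sin_dist_le_ratio:
  "invertible G \<Longrightarrow> sin_dist e (least_dir G) \<le> norm (G *v e) / sv1 G"
  using sv1_mult_sin_dist_le[of G e] sv1_pos[of G] by (simp add: le_divide_eq mult.commute)

lemma ratio_le_sin_dist: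
  assumes "norm e = 1" "invertible G"
  shows "norm (G *v e) / sv1 G \<le> sv_ratio G + sin_dist e (least_dir G)"
  using norm_mv_le_sin_dist[OF assms(1), of G] sv1_pos[OF assms(2)]
  by (simp add: sv_ratio_def divide_le_eq algebra_simps)

text \<open>The most contracted direction of B ** G is close to that of G once G is strongly dominated:
  its image under G is already small compared with sv1 G, and B distorts lengths by at most
  its condition number.\<close>
lemma sin_dist_least_dir_mult:
  assumes B: "invertible B" and G: "invertible G"
  shows "sin_dist (least_dir (B ** G)) (least_dir G) \<le> (sv1 B / sv2 B) * sv_ratio G"
proof -
  let ?z = "least_dir (B ** G)"
  have pB: "0 < sv2 B" and pG: "0 < sv1 G" using sv2_pos[OF B] sv1_pos[OF G] .
  have "sv2 B * (sv1 G * sin_dist ?z (least_dir G)) \<le> sv2 B * norm (G *v ?z)"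
    using sv1_mult_sin_dist_le[of G ?z] pB by simp
  also have "\<dots> \<le> norm (B *v (G *v ?z))" by (rule sv2_mult_norm_le)
  also have "\<dots> \<le> norm (B *v (G *v least_dir G))"
    using least_dir_minimal[of "least_dir G" "B ** G"] by (simp add: matrix_vector_mul_assoc)
  also have "\<dots> \<le> sv1 B * sv2 G" using norm_mv_le_sv1[of B "G *v least_dir G"] by (simp add: sv2_eq)
  finally have "(sv2 B * sv1 G) * sin_dist ?z (least_dir G) \<le> sv1 B * sv2 G"
    by (simp add: mult.assoc)
  thus ?thesis using pB pG by (simp add: sv_ratio_def le_divide_eq mult.commute)
qed

lemma sum_geometric_tail_le:
  fixes \<theta> :: real
  assumes "0 \<le> \<theta>" "\<theta> < 1"
  shows "(\<Sum>k\<in>{n..<N}. \<theta>^k) \<le> \<theta>^n / (1 - \<theta>)"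
proof (cases "n \<le> N")
  case True
  have "(1 - \<theta>) * (\<Sum>k\<in>{n..<N}. \<theta>^k) = \<theta>^n - \<theta>^N"
    using True
  proof (induction N rule: dec_induct)
    case (step m)
    have "(1 - \<theta>) * (\<Sum>k\<in>{n..<Suc m}. \<theta>^k) = (1 - \<theta>) * (\<Sum>k\<in>{n..<m}. \<theta>^k) + (1 - \<theta>) * \<theta>^m"
      using step.hyps by (simp add: distrib_left)
    also have "\<dots> = \<theta>^n - \<theta>^Suc m" by (simp only: step.IH) (simp add: algebra_simps)
    finally show ?case .
  qed simp
  hence "(1 - \<theta>) * (\<Sum>k\<in>{n..<N}. \<theta>^k) \<le> \<theta>^n" using assms by simp
  thus ?thesis using assms by (simp add: le_divide_eq mult.commute)
qed (use assms in simp)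

lemma frequently_le_tendsto_imp_le:
  fixes a :: "nat \<Rightarrow> real"
  assumes "a \<longlonglongrightarrow> l" "\<exists>\<^sub>F k in sequentially. x \<le> a k"
  shows "x \<le> l"
proof (rule ccontr)
  assume "\<not> x \<le> l"
  hence "\<forall>\<^sub>F k in sequentially. a k < x" using order_tendstoD(2)[OF assms(1)] by simp
  hence "\<forall>\<^sub>F k in sequentially. \<not> x \<le> a k" by (rule eventually_mono) simp
  with assms(2) show False by (simp add: frequently_def)
qed

text \<open>Each step moves the most contracted direction by at most the condition number of B k times
  sv_ratio (G k); the geometric series sums these moves.\<close>
lemma sin_dist_least_dir_chain:
  fixes \<theta> D \<mu> :: real
  assumes chain: "\<And>k. n \<le> k \<Longrightarrow> k < N \<Longrightarrow> G (Suc k) = B k ** G k"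
    and B: "\<And>k. invertible (B k)" and cond: "\<And>k. sv1 (B k) / sv2 (B k) \<le> \<mu>"
    and G: "\<And>k. invertible (G k)"
    and ratio: "\<And>k. n \<le> k \<Longrightarrow> k < N \<Longrightarrow> sv_ratio (G k) \<le> D * \<theta>^k"
    and "0 \<le> \<mu>" "0 \<le> D" "0 \<le> \<theta>" "\<theta> < 1" "n \<le> N"
  shows "sin_dist (least_dir (G N)) (least_dir (G n)) \<le> \<mu> * (D * \<theta>^n / (1 - \<theta>))"
proof -
  have "sin_dist (least_dir (G N)) (least_dir (G n)) \<le> \<mu> * (\<Sum>k\<in>{n..<N}. sv_ratio (G k))"
    using \<open>n \<le> N\<close> chain ratio
  proof (induction N rule: dec_induct)
    case (step m)
    have "sin_dist (least_dir (G (Suc m))) (least_dir (G m)) \<le> (sv1 (B m) / sv2 (B m)) * sv_ratio (G m)"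
      using sin_dist_least_dir_mult[OF B G, of m m] step.prems(1)[of m] step.hyps by simp
    also have "\<dots> \<le> \<mu> * sv_ratio (G m)" by (intro mult_right_mono cond sv_ratio_nonneg)
    finally have "sin_dist (least_dir (G (Suc m))) (least_dir (G m)) \<le> \<mu> * sv_ratio (G m)" .
    moreover have "sin_dist (least_dir (G m)) (least_dir (G n)) \<le> \<mu> * (\<Sum>k\<in>{n..<m}. sv_ratio (G k))"
      using step by simp
    ultimately show ?case
      using sin_dist_triangle[of "least_dir (G (Suc m))" "least_dir (G m)" "least_dir (G n)"] step.hyps
      by (simp add: distrib_left)
  qed simp
  also have "\<dots> \<le> \<mu> * (\<Sum>k\<in>{n..<N}. D * \<theta>^k)"
    using assms by (intro mult_left_mono sum_mono ratio) auto
  also have "\<dots> \<le> \<mu> * (D * \<theta>^n / (1 - \<theta>))"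
    using assms by (auto simp: sum_distrib_left[symmetric] intro!: mult_left_mono sum_geometric_tail_le
        simp del: times_divide_eq_right simp add: times_divide_eq_right[symmetric])
  finally show ?thesis .
qed

lemma sin_dist_least_dir_le:
  fixes \<theta> D \<mu> :: real
  assumes chain: "\<And>k. n \<le> k \<Longrightarrow> k < N \<Longrightarrow> G (Suc k) = B k ** G k"
    and B: "\<And>k. invertible (B k)" and cond: "\<And>k. sv1 (B k) / sv2 (B k) \<le> \<mu>"
    and G: "\<And>k. invertible (G k)"
    and ratio: "\<And>k. n \<le> k \<Longrightarrow> k < N \<Longrightarrow> sv_ratio (G k) \<le> D * \<theta>^k"
    and "0 \<le> \<mu>" "0 \<le> D" "0 \<le> \<theta>" "\<theta> < 1" "n \<le> N" and e: "norm e = 1"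
  shows "sin_dist e (least_dir (G n)) \<le> norm (G N *v e) / sv1 (G N) + \<mu> * (D * \<theta>^n / (1 - \<theta>))"
proof -
  have "sin_dist e (least_dir (G n)) \<le> sin_dist e (least_dir (G N)) + sin_dist (least_dir (G N)) (least_dir (G n))"
    by (intro sin_dist_triangle e norm_least_dir)
  also have "sin_dist e (least_dir (G N)) \<le> norm (G N *v e) / sv1 (G N)"
    by (rule sin_dist_le_ratio[OF G])
  also have "sin_dist (least_dir (G N)) (least_dir (G n)) \<le> \<mu> * (D * \<theta>^n / (1 - \<theta>))"
    by (rule sin_dist_least_dir_chain[OF chain B cond G ratio]) (use assms in auto)
  finally show ?thesis by simp
qed

text \<open>Letting N tend to infinity in sin_dist_least_dir_le shows that e lies within O(\<theta>^n) of
  least_dir (G n).\<close>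
lemma stable_vector_decay:
  fixes \<theta> D \<mu> :: real
  assumes chain: "\<And>k. G (Suc k) = B k ** G k"
    and B: "\<And>k. invertible (B k)" and cond: "\<And>k. sv1 (B k) / sv2 (B k) \<le> \<mu>"
    and G: "\<And>k. invertible (G k)" and ratio: "\<And>k. sv_ratio (G k) \<le> D * \<theta>^k"
    and "0 \<le> \<mu>" "0 \<le> D" "0 \<le> \<theta>" "\<theta> < 1" and e: "norm e = 1"
    and stable: "(\<lambda>k. norm (G k *v e) / sv1 (G k)) \<longlonglongrightarrow> 0"
  shows "norm (G n *v e) \<le> (D + \<mu> * D / (1 - \<theta>)) * \<theta>^n * sv1 (G n)"
proof -
  have lim: "(\<lambda>N. norm (G N *v e) / sv1 (G N) + \<mu> * (D * \<theta>^n / (1 - \<theta>))) \<longlonglongrightarrow> 0 + \<mu> * (D * \<theta>^n / (1 - \<theta>))"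
    by (intro tendsto_add stable tendsto_const)
  have "\<forall>\<^sub>F N in sequentially.
      sin_dist e (least_dir (G n)) \<le> norm (G N *v e) / sv1 (G N) + \<mu> * (D * \<theta>^n / (1 - \<theta>))"
    using eventually_ge_at_top[of n]
    by eventually_elim (rule sin_dist_least_dir_le[OF chain B cond G ratio], use assms in auto)
  from frequently_le_tendsto_imp_le[OF lim eventually_frequently[OF trivial_limit_sequentially this]]
  have dist: "sin_dist e (least_dir (G n)) \<le> \<mu> * (D * \<theta>^n / (1 - \<theta>))" by simp
  have "norm (G n *v e) \<le> (sv_ratio (G n) + sin_dist e (least_dir (G n))) * sv1 (G n)"
    using ratio_le_sin_dist[OF e G] sv1_pos[OF G] by (simp add: divide_le_eq)
  also have "\<dots> \<le> (D * \<theta>^n + \<mu> * (D * \<theta>^n / (1 - \<theta>))) * sv1 (G n)"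
    by (intro mult_right_mono add_mono ratio dist sv1_nonneg)
  also have "\<dots> = (D + \<mu> * D / (1 - \<theta>)) * \<theta>^n * sv1 (G n)" by (simp add: algebra_simps)
  finally show ?thesis .
qed

section \<open>Cocycles over bi-infinite words\<close>

lemma invertible_mat_1: "invertible (mat 1 :: 'a::semiring_1^'n^'n)"
  unfolding invertible_def by (metis matrix_mul_lid)

lemma word_prod_Nil [simp]: "word_prod A [] = mat 1"
  and word_prod_Cons [simp]: "word_prod A (a # w) = A a ** word_prod A w"
  by (simp_all add: word_prod_def)

lemma word_prod_append: "word_prod A (xs @ ys) = word_prod A xs ** word_prod A ys"
  by (induction xs) (simp_all add: matrix_mul_assoc)

lemma invertible_word_prod: "(\<And>i. invertible (A i)) \<Longrightarrow> invertible (word_prod A w)"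
  by (induction w) (simp_all add: invertible_mat_1 invertible_mult)

fun cocycle :: "('n \<Rightarrow> real^2^2) \<Rightarrow> (int \<Rightarrow> 'n) \<Rightarrow> int \<Rightarrow> nat \<Rightarrow> real^2^2" where
  "cocycle A \<omega> j 0 = mat 1"
| "cocycle A \<omega> j (Suc n) = A (\<omega> (j + int n)) ** cocycle A \<omega> j n"

lemma cocycle_eq_word_prod: "cocycle A \<omega> j n = word_prod A (rev (map (\<lambda>i. \<omega> (j + int i)) [0..<n]))"
  by (induction n) (simp_all add: word_prod_append)

lemma cocycle_add: "cocycle A \<omega> j (n + k) = cocycle A \<omega> (j + int n) k ** cocycle A \<omega> j n"
  by (induction k) (simp_all add: matrix_mul_assoc algebra_simps)

lemma cocycle_Suc_left:
  "cocycle A \<omega> (j - int (Suc m)) (Suc m) = cocycle A \<omega> (j - int m) m ** A (\<omega> (j - int m - 1))"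
  using cocycle_add[of A \<omega> "j - int (Suc m)" 1 m] by (simp add: algebra_simps)

lemma invertible_cocycle: "(\<And>i. invertible (A i)) \<Longrightarrow> invertible (cocycle A \<omega> j n)"
  by (simp add: cocycle_eq_word_prod invertible_word_prod)

definition stable_at :: "('n \<Rightarrow> real^2^2) \<Rightarrow> (int \<Rightarrow> 'n) \<Rightarrow> int \<Rightarrow> real^2 \<Rightarrow> bool" where
  "stable_at A \<omega> j e \<longleftrightarrow>
     (\<lambda>k. norm (cocycle A \<omega> j k *v e) / sv1 (cocycle A \<omega> j k)) \<longlonglongrightarrow> 0"

definition unstable_at :: "('n \<Rightarrow> real^2^2) \<Rightarrow> (int \<Rightarrow> 'n) \<Rightarrow> int \<Rightarrow> real^2 \<Rightarrow> bool" where
  "unstable_at A \<omega> j e \<longleftrightarrow>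
     (\<lambda>m. norm (matrix_inv (cocycle A \<omega> (j - int m) m) *v e)
           / sv1 (matrix_inv (cocycle A \<omega> (j - int m) m))) \<longlonglongrightarrow> 0"

lemma stable_at_scaleR: "stable_at A \<omega> j e \<Longrightarrow> stable_at A \<omega> j (c *\<^sub>R e)"
  unfolding stable_at_def
  by (drule tendsto_mult_left[of _ 0 sequentially "\<bar>c\<bar>"]) (simp add: matrix_vector_mult_scaleR)

lemma unstable_at_scaleR: "unstable_at A \<omega> j e \<Longrightarrow> unstable_at A \<omega> j (c *\<^sub>R e)"
  unfolding unstable_at_def
  by (drule tendsto_mult_left[of _ 0 sequentially "\<bar>c\<bar>"]) (simp add: matrix_vector_mult_scaleR)

locale dominated_family =
  fixes A :: "'n::finite \<Rightarrow> real^2^2" and C \<tau> :: real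
  assumes invertible_A: "\<And>i. invertible (A i)" and C_pos: "0 < C" and \<tau>: "0 < \<tau>" "\<tau> < 1"
    and sv_ratio_word_prod: "\<And>w. sv_ratio (word_prod A w) \<le> C * \<tau> ^ length w"
begin

lemma word_prod_invertible [simp]: "invertible (word_prod A w)"
  by (rule invertible_word_prod[of A, OF invertible_A])

lemma cocycle_invertible [simp]: "invertible (cocycle A \<omega> j n)"
  by (rule invertible_cocycle[OF invertible_A])

lemma stable_at_shift:
  assumes "stable_at A \<omega> j e"
  shows "stable_at A \<omega> (j + int n) (cocycle A \<omega> j n *v e)"
proof -
  let ?F = "cocycle A \<omega> j n"
  let ?a = "\<lambda>k. norm (cocycle A \<omega> j k *v e) / sv1 (cocycle A \<omega> j k)"
  have lim: "(\<lambda>k. sv1 ?F * ?a (k + n)) \<longlonglongrightarrow> 0"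
    using tendsto_mult_left[OF LIMSEQ_ignore_initial_segment[OF assms[unfolded stable_at_def]]]
    by simp
  have "norm (norm (cocycle A \<omega> (j + int n) k *v (?F *v e)) / sv1 (cocycle A \<omega> (j + int n) k))
        \<le> sv1 ?F * ?a (k + n)" for k
    using div_sv1_le[of "cocycle A \<omega> (j + int n) k" ?F "norm (cocycle A \<omega> (j + int n) k *v (?F *v e))"]
    by (simp add: matrix_vector_mul_assoc cocycle_add[of A \<omega> j n k, symmetric] add.commute sv1_nonneg)
  thus ?thesis unfolding stable_at_def
    by (intro Lim_null_comparison[OF always_eventually lim]) blast
qed

lemma stable_at_unshift:
  assumes "stable_at A \<omega> (j + int n) (cocycle A \<omega> j n *v e)"
  shows "stable_at A \<omega> j e"
proof -
  let ?F = "cocycle A \<omega> j n"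
  let ?a = "\<lambda>k. norm (cocycle A \<omega> (j + int n) k *v (?F *v e)) / sv1 (cocycle A \<omega> (j + int n) k)"
  have lim: "(\<lambda>k. sv1 (matrix_inv ?F) * ?a k) \<longlonglongrightarrow> 0"
    using tendsto_mult_left[OF assms[unfolded stable_at_def]] by simp
  have "norm (norm (cocycle A \<omega> j (k + n) *v e) / sv1 (cocycle A \<omega> j (k + n))) \<le> sv1 (matrix_inv ?F) * ?a k" for k
  proof -
    have eq: "cocycle A \<omega> j (k + n) = cocycle A \<omega> (j + int n) k ** ?F"
      using cocycle_add[of A \<omega> j n k] by (simp add: add.commute)
    have "cocycle A \<omega> j (k + n) ** matrix_inv ?F = cocycle A \<omega> (j + int n) k"
      by (simp add: eq matrix_mul_assoc[symmetric] matrix_inv_right)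
    thus ?thesis
      using div_sv1_le[of "cocycle A \<omega> j (k + n)" "matrix_inv ?F" "norm (cocycle A \<omega> j (k + n) *v e)"]
      by (simp add: invertible_matrix_inv sv1_nonneg) (simp add: eq matrix_vector_mul_assoc)
  qed
  hence "(\<lambda>k. norm (cocycle A \<omega> j (k + n) *v e) / sv1 (cocycle A \<omega> j (k + n))) \<longlonglongrightarrow> 0"
    by (intro Lim_null_comparison[OF always_eventually lim]) blast
  thus ?thesis unfolding stable_at_def by (rule LIMSEQ_offset)
qed

lemma matrix_inv_cocycle_shift:
  "matrix_inv (cocycle A \<omega> (j - int m) (m + n)) ** cocycle A \<omega> j n = matrix_inv (cocycle A \<omega> (j - int m) m)"
  and matrix_inv_cocycle_add:
  "matrix_inv (cocycle A \<omega> (j - int m) (m + n))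
     = matrix_inv (cocycle A \<omega> (j - int m) m) ** matrix_inv (cocycle A \<omega> j n)"
proof -
  have "cocycle A \<omega> (j - int m) (m + n) = cocycle A \<omega> j n ** cocycle A \<omega> (j - int m) m"
    using cocycle_add[of A \<omega> "j - int m" m n] by simp
  thus inv: "matrix_inv (cocycle A \<omega> (j - int m) (m + n))
     = matrix_inv (cocycle A \<omega> (j - int m) m) ** matrix_inv (cocycle A \<omega> j n)"
    by (simp add: matrix_inv_mult)
  show "matrix_inv (cocycle A \<omega> (j - int m) (m + n)) ** cocycle A \<omega> j n = matrix_inv (cocycle A \<omega> (j - int m) m)"
    unfolding inv by (simp add: matrix_mul_assoc[symmetric] matrix_inv_left)
qed

lemma unstable_at_shift:
  assumes "unstable_at A \<omega> j e"
  shows "unstable_at A \<omega> (j + int n) (cocycle A \<omega> j n *v e)"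
proof -
  let ?F = "cocycle A \<omega> j n"
  let ?P = "\<lambda>m. matrix_inv (cocycle A \<omega> (j - int m) m)"
  let ?X = "\<lambda>m. matrix_inv (cocycle A \<omega> (j + int n - int m) m)"
  have lim: "(\<lambda>m. sv1 ?F * (norm (?P m *v e) / sv1 (?P m))) \<longlonglongrightarrow> 0"
    using tendsto_mult_left[OF assms[unfolded unstable_at_def]] by simp
  have "norm (norm (?X (m + n) *v (?F *v e)) / sv1 (?X (m + n))) \<le> sv1 ?F * (norm (?P m *v e) / sv1 (?P m))" for m
    using div_sv1_le[of "?X (m + n)" ?F "norm (?P m *v e)"] matrix_inv_cocycle_shift[of \<omega> j m n]
    by (simp add: matrix_vector_mul_assoc invertible_matrix_inv sv1_nonneg)
  hence "(\<lambda>m. norm (?X (m + n) *v (?F *v e)) / sv1 (?X (m + n))) \<longlonglongrightarrow> 0"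
    by (intro Lim_null_comparison[OF always_eventually lim]) blast
  thus ?thesis unfolding unstable_at_def by (rule LIMSEQ_offset)
qed

lemma unstable_at_unshift:
  assumes "unstable_at A \<omega> (j + int n) (cocycle A \<omega> j n *v e)"
  shows "unstable_at A \<omega> j e"
proof -
  let ?F = "cocycle A \<omega> j n"
  let ?P = "\<lambda>m. matrix_inv (cocycle A \<omega> (j - int m) m)"
  let ?X = "\<lambda>m. matrix_inv (cocycle A \<omega> (j + int n - int m) m)"
  let ?a = "\<lambda>m. norm (?X m *v (?F *v e)) / sv1 (?X m)"
  have "(\<lambda>m. ?a (m + n)) \<longlonglongrightarrow> 0"
    using assms unfolding unstable_at_def by (rule LIMSEQ_ignore_initial_segment)
  from tendsto_mult_left[OF this, of "sv1 (matrix_inv ?F)"]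
  have lim: "(\<lambda>m. sv1 (matrix_inv ?F) * ?a (m + n)) \<longlonglongrightarrow> 0" by simp
  have "norm (norm (?P m *v e) / sv1 (?P m)) \<le> sv1 (matrix_inv ?F) * ?a (m + n)" for m
    using div_sv1_le[of "?P m" "matrix_inv ?F" "norm (?P m *v e)"]
      matrix_inv_cocycle_shift[of \<omega> j m n] matrix_inv_cocycle_add[of \<omega> j m n]
    by (simp add: matrix_vector_mul_assoc invertible_matrix_inv sv1_nonneg)
  thus ?thesis unfolding unstable_at_def
    by (intro Lim_null_comparison[OF always_eventually lim]) blast
qed

definition cond_max :: real where
  "cond_max = Max (range (\<lambda>i. sv1 (A i) / sv2 (A i)))"

definition ratio_min :: real where
  "ratio_min = Min (range (\<lambda>i. sv_ratio (A i)))"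

lemma cond_le_cond_max: "sv1 (A i) / sv2 (A i) \<le> cond_max"
  unfolding cond_max_def by (rule Max_ge) auto

lemma cond_matrix_inv_le_cond_max: "sv1 (matrix_inv (A i)) / sv2 (matrix_inv (A i)) \<le> cond_max"
  using cond_le_cond_max[of i] sv1_pos[OF invertible_A] sv2_pos[OF invertible_A]
  by (simp add: sv1_matrix_inv[OF invertible_A] sv2_matrix_inv[OF invertible_A] field_simps)

lemma cond_max_nonneg: "0 \<le> cond_max"
  using cond_le_cond_max[of undefined] sv1_nonneg sv2_nonneg by (metis divide_nonneg_nonneg order_trans)

lemma ratio_min_pos: "0 < ratio_min"
  unfolding ratio_min_def
  using sv1_pos[OF invertible_A] sv2_pos[OF invertible_A] by (subst Min_gr_iff) (auto simp: sv_ratio_def)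

lemma ratio_min_le: "ratio_min \<le> sv_ratio (A i)"
  unfolding ratio_min_def by (rule Min_le) auto

lemma sv_ratio_cocycle_le: "sv_ratio (cocycle A \<omega> j n) \<le> C * \<tau> ^ n"
  using sv_ratio_word_prod[of "rev (map (\<lambda>i. \<omega> (j + int i)) [0..<n])"]
  by (simp add: cocycle_eq_word_prod)

lemma sv_ratio_cocycle_ge: "ratio_min ^ n \<le> sv_ratio (cocycle A \<omega> j n)"
proof (induction n)
  case (Suc n)
  have "ratio_min ^ Suc n \<le> sv_ratio (A (\<omega> (j + int n))) * sv_ratio (cocycle A \<omega> j n)"
    unfolding power_Suc
    by (intro mult_mono Suc.IH ratio_min_le) (simp_all add: ratio_min_pos less_imp_le sv_ratio_nonneg)
  also have "\<dots> \<le> sv_ratio (cocycle A \<omega> j (Suc n))"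
    by (simp add: sv_ratio_mult invertible_A)
  finally show ?case .
qed (simp add: sv_ratio_mat_1)

lemma stable_unstable_everywhere:
  assumes "e \<noteq> 0" "stable_at A \<omega> 0 e" "unstable_at A \<omega> 0 e"
  shows "\<exists>f. norm f = 1 \<and> stable_at A \<omega> j f \<and> unstable_at A \<omega> j f"
proof -
  have "\<exists>g. g \<noteq> 0 \<and> stable_at A \<omega> j g \<and> unstable_at A \<omega> j g"
  proof (cases "0 \<le> j")
    case True
    hence j: "j = 0 + int (nat j)" by simp
    have "cocycle A \<omega> 0 (nat j) *v e \<noteq> 0"
      using matrix_inv_mv_cancel[OF cocycle_invertible, of \<omega> 0 "nat j" e] assms(1) by force
    thus ?thesis using stable_at_shift[OF assms(2)] unstable_at_shift[OF assms(3)] j by metis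
  next
    case False
    define n where "n = nat (- j)"
    have j: "j + int n = 0" using False by (simp add: n_def)
    let ?g = "matrix_inv (cocycle A \<omega> j n) *v e"
    have g: "cocycle A \<omega> j n *v ?g = e" by (rule mv_matrix_inv_cancel[OF cocycle_invertible])
    have "stable_at A \<omega> j ?g" by (rule stable_at_unshift[of \<omega> j n]) (simp add: g j assms(2))
    moreover have "unstable_at A \<omega> j ?g" by (rule unstable_at_unshift[of \<omega> j n]) (simp add: g j assms(3))
    moreover have "?g \<noteq> 0" using g assms(1) by auto
    ultimately show ?thesis by blast
  qed
  then obtain g where "g \<noteq> 0" "stable_at A \<omega> j g" "unstable_at A \<omega> j g" by blast
  thus ?thesis
    by (intro exI[of _ "(1 / norm g) *\<^sub>R g"]) (simp add: stable_at_scaleR unstable_at_scaleR)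
qed

text \<open>Bootstrap: a vector e that is stable at time j is contracted by the forward block F of
  length n at rate \<theta>^n relative to sv1 F, and its image, being unstable at time j + n, is
  contracted by the inverse of F at the same rate relative to 1 / sv2 F. Together this bounds
  sv_ratio F by rate \<theta>^(2n).\<close>
lemma sv_ratio_cocycle_bootstrap:
  fixes D \<theta> :: real
  assumes common: "\<And>j. \<exists>e. norm e = 1 \<and> stable_at A \<omega> j e \<and> unstable_at A \<omega> j e"
    and bound: "\<And>j n. sv_ratio (cocycle A \<omega> j n) \<le> D * \<theta>^n"
    and "0 \<le> \<theta>" "\<theta> < 1" "0 \<le> D"
  shows "sv_ratio (cocycle A \<omega> j n) \<le> (D + cond_max * D / (1 - \<theta>))\<^sup>2 * (\<theta>\<^sup>2)^n"
proof -
  let ?K = "D + cond_max * D / (1 - \<theta>)"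
  have K: "0 \<le> ?K" using assms cond_max_nonneg by simp
  obtain e where e: "norm e = 1" "stable_at A \<omega> j e" "unstable_at A \<omega> j e" using common by blast
  let ?F = "cocycle A \<omega> j n" and ?f = "cocycle A \<omega> j n *v e"
  have forward: "norm ?f \<le> ?K * \<theta>^n * sv1 ?F"
    by (rule stable_vector_decay[of "\<lambda>k. cocycle A \<omega> j k" "\<lambda>k. A (\<omega> (j + int k))" cond_max D \<theta> e n])
       (use e bound assms cond_max_nonneg cond_le_cond_max invertible_A in \<open>auto simp: stable_at_def\<close>)
  have "?f \<noteq> 0" using matrix_inv_mv_cancel[OF cocycle_invertible, of \<omega> j n e] e(1) by force
  hence f: "0 < norm ?f" by simp
  let ?f' = "(1 / norm ?f) *\<^sub>R ?f"
  let ?G = "\<lambda>m. matrix_inv (cocycle A \<omega> (j + int n - int m) m)"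
  let ?B = "\<lambda>m. matrix_inv (A (\<omega> (j + int n - int m - 1)))"
  have chain: "?G (Suc m) = ?B m ** ?G m" for m
    by (simp only: cocycle_Suc_left matrix_inv_mult[OF cocycle_invertible invertible_A])
  have "unstable_at A \<omega> (j + int n) ?f'"
    by (rule unstable_at_scaleR[OF unstable_at_shift[OF e(3)]])
  hence backward: "norm (?G n *v ?f') \<le> ?K * \<theta>^n * sv1 (?G n)"
    by (intro stable_vector_decay[of ?G ?B cond_max D \<theta> ?f' n])
       (use chain bound assms f cond_max_nonneg in \<open>auto simp: unstable_at_def
         cond_matrix_inv_le_cond_max invertible_matrix_inv invertible_A sv_ratio_matrix_inv\<close>)
  have "norm (?G n *v ?f') = 1 / norm ?f"
    using e(1) by (simp add: matrix_vector_mult_scaleR matrix_inv_mv_cancel)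
  hence "1 / norm ?f \<le> ?K * \<theta>^n * (1 / sv2 ?F)"
    using backward by (simp add: sv1_matrix_inv)
  hence "sv2 ?F \<le> ?K * \<theta>^n * norm ?f"
    using sv2_pos[OF cocycle_invertible] f by (simp add: field_simps)
  also have "\<dots> \<le> ?K * \<theta>^n * (?K * \<theta>^n * sv1 ?F)"
    using forward K assms by (intro mult_left_mono) auto
  also have "\<dots> = ?K\<^sup>2 * (\<theta>\<^sup>2)^n * sv1 ?F"
    by (simp add: power2_eq_square power_mult_distrib[symmetric])
  finally show ?thesis
    using sv1_pos[OF cocycle_invertible] by (simp add: sv_ratio_def divide_le_eq)
qed

lemma sv_ratio_cocycle_iterated_rate:
  assumes "\<And>j. \<exists>e. norm e = 1 \<and> stable_at A \<omega> j e \<and> unstable_at A \<omega> j e"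
  shows "\<exists>D\<ge>0. \<forall>j n. sv_ratio (cocycle A \<omega> j n) \<le> D * (\<tau>^(2^i))^n"
proof (induction i)
  case 0
  show ?case using sv_ratio_cocycle_le C_pos by (intro exI[of _ C]) auto
next
  case (Suc i)
  then obtain D where D: "0 \<le> D" "\<And>j n. sv_ratio (cocycle A \<omega> j n) \<le> D * (\<tau>^(2^i))^n" by blast
  have "\<tau>^(2^i) < 1" using \<tau> by (simp add: power_less_one_iff)
  moreover have "\<tau>^(2^Suc i) = (\<tau>^(2^i))\<^sup>2" by (simp add: power_mult[symmetric] mult.commute)
  ultimately show ?case
    using sv_ratio_cocycle_bootstrap[OF assms D(2) _ _ D(1)] \<tau> by (intro exI[of _ "(D + cond_max * D / (1 - \<tau>^(2^i)))\<^sup>2"]) simp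
qed

text \<open>Iterating the bootstrap, the rates \<tau>^(2^i) eventually beat the lower bound ratio_min^n.\<close>
theorem no_stable_unstable_vector:
  assumes "e \<noteq> 0" "stable_at A \<omega> 0 e" "unstable_at A \<omega> 0 e"
  shows False
proof -
  obtain i where i: "\<tau>^i < ratio_min" using real_arch_pow_inv[OF ratio_min_pos \<tau>(2)] by blast
  let ?\<theta> = "\<tau>^(2^i)"
  have "?\<theta> \<le> \<tau>^i" using \<tau> by (intro power_decreasing) (auto simp: less_imp_le)
  hence "?\<theta> < ratio_min" using i by linarith
  hence \<theta>: "0 < ?\<theta>" "1 < ratio_min / ?\<theta>" using \<tau> by simp_all
  obtain D where D: "\<And>j n. sv_ratio (cocycle A \<omega> j n) \<le> D * ?\<theta>^n"
    using sv_ratio_cocycle_iterated_rate[OF stable_unstable_everywhere[OF assms], of i] by blast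
  obtain n where n: "D < (ratio_min / ?\<theta>)^n" using real_arch_pow[OF \<theta>(2)] by blast
  have "ratio_min^n \<le> D * ?\<theta>^n" using sv_ratio_cocycle_ge[of n \<omega> 0] D[of 0 n] by linarith
  hence "(ratio_min / ?\<theta>)^n \<le> D" using \<theta>(1) by (simp add: power_divide divide_le_eq)
  with n show False by simp
qed

end

section \<open>Limit words\<close>

definition ends :: "nat \<Rightarrow> 'a list \<Rightarrow> 'a list \<times> 'a list" where
  "ends N xs = (take N xs, take N (rev xs))"

lemma ends_pigeonhole:
  fixes w :: "nat \<Rightarrow> 'a::finite list"
  assumes J: "infinite J" and long: "\<forall>\<^sub>F k in sequentially. N \<le> length (w k)"
  shows "\<exists>J'. J' \<subseteq> J \<and> infinite J' \<and> (\<exists>W. \<forall>k\<in>J'. N \<le> length (w k) \<and> ends N (w k) = W)"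
proof -
  obtain K where K: "\<And>k. K \<le> k \<Longrightarrow> N \<le> length (w k)"
    using long unfolding eventually_sequentially by blast
  let ?J = "J - {..<K}" and ?L = "{xs. set xs \<subseteq> (UNIV::'a set) \<and> length xs \<le> N}"
  have "finite ?L" by (rule finite_lists_length_le) simp
  hence "finite ((\<lambda>k. ends N (w k)) ` ?J)"
    by (intro finite_subset[OF _ finite_cartesian_product]) (auto simp: ends_def)
  moreover have "infinite ?J" using J by (simp add: Diff_infinite_finite)
  ultimately obtain W where "infinite ((\<lambda>k. ends N (w k)) -` {W} \<inter> ?J)"
    using inf_img_fin_dom' by blast
  thus ?thesis using K by (intro exI[of _ "(\<lambda>k. ends N (w k)) -` {W} \<inter> ?J"]) auto
qed

primrec nested_sets :: "(nat \<Rightarrow> 'a list) \<Rightarrow> nat \<Rightarrow> nat set" where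
  "nested_sets w 0 = UNIV"
| "nested_sets w (Suc N) = (SOME J'. J' \<subseteq> nested_sets w N \<and> infinite J' \<and>
     (\<exists>W. \<forall>k\<in>J'. Suc N \<le> length (w k) \<and> ends (Suc N) (w k) = W))"

declare nested_sets.simps(2) [simp del]

lemma nested_sets:
  fixes w :: "nat \<Rightarrow> 'a::finite list"
  assumes long: "\<And>N. \<forall>\<^sub>F k in sequentially. N \<le> length (w k)"
  shows "infinite (nested_sets w N) \<and> (\<exists>W. \<forall>k\<in>nested_sets w N. N \<le> length (w k) \<and> ends N (w k) = W)
    \<and> nested_sets w (Suc N) \<subseteq> nested_sets w N"
proof (induction N)
  case 0
  have "\<exists>J'. J' \<subseteq> UNIV \<and> infinite J' \<and> (\<exists>W. \<forall>k\<in>J'. Suc 0 \<le> length (w k) \<and> ends (Suc 0) (w k) = W)"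
    using long by (intro ends_pigeonhole) auto
  hence "nested_sets w (Suc 0) \<subseteq> nested_sets w 0"
    unfolding nested_sets.simps by (rule someI2_ex) blast
  thus ?case by (simp add: ends_def)
next
  case (Suc N)
  have ex: "\<exists>J'. J' \<subseteq> nested_sets w N \<and> infinite J' \<and>
      (\<exists>W. \<forall>k\<in>J'. Suc N \<le> length (w k) \<and> ends (Suc N) (w k) = W)"
    using Suc.IH long by (intro ends_pigeonhole) auto
  hence P: "nested_sets w (Suc N) \<subseteq> nested_sets w N \<and> infinite (nested_sets w (Suc N)) \<and>
      (\<exists>W. \<forall>k\<in>nested_sets w (Suc N). Suc N \<le> length (w k) \<and> ends (Suc N) (w k) = W)"
    unfolding nested_sets.simps(2) by (rule someI_ex)
  have "\<exists>J'. J' \<subseteq> nested_sets w (Suc N) \<and> infinite J' \<and>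
      (\<exists>W. \<forall>k\<in>J'. Suc (Suc N) \<le> length (w k) \<and> ends (Suc (Suc N)) (w k) = W)"
    using P long by (intro ends_pigeonhole) auto
  hence "nested_sets w (Suc (Suc N)) \<subseteq> nested_sets w (Suc N)"
    unfolding nested_sets.simps(2)[of w "Suc N"] by (rule someI2_ex) blast
  thus ?case using P by blast
qed

lemma nested_sets_antimono:
  fixes w :: "nat \<Rightarrow> 'a::finite list"
  assumes "\<And>N. \<forall>\<^sub>F k in sequentially. N \<le> length (w k)" "N \<le> N'"
  shows "nested_sets w N' \<subseteq> nested_sets w N"
  using assms(2) by (induction N' rule: dec_induct) (use nested_sets[OF assms(1)] in blast)+

text \<open>Position j \<ge> 0 of the limit word is read off the end of the words, position -i-1 off
  their beginning, from an index in the nested set on which these letters have stabilised.\<close>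
definition limit_word :: "(nat \<Rightarrow> 'a list) \<Rightarrow> int \<Rightarrow> 'a" where
  "limit_word w j = (let i = nat (if 0 \<le> j then j else - j - 1); k = (SOME k. k \<in> nested_sets w (Suc i))
     in if 0 \<le> j then rev (w k) ! i else w k ! i)"

lemma limit_word_nth:
  fixes w :: "nat \<Rightarrow> 'a::finite list"
  assumes long: "\<And>N. \<forall>\<^sub>F k in sequentially. N \<le> length (w k)"
    and k: "k \<in> nested_sets w N" and i: "i < N"
  shows "limit_word w (int i) = rev (w k) ! i" "limit_word w (- int i - 1) = w k ! i"
proof -
  let ?k = "SOME k. k \<in> nested_sets w (Suc i)"
  have "nested_sets w (Suc i) \<noteq> {}" using nested_sets[OF long, of "Suc i"] by auto
  hence k0: "?k \<in> nested_sets w (Suc i)" by (rule some_in_eq[THEN iffD2])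
  have k1: "k \<in> nested_sets w (Suc i)" using nested_sets_antimono[OF long, of "Suc i" N] i k by auto
  obtain W where W: "\<forall>k\<in>nested_sets w (Suc i). Suc i \<le> length (w k) \<and> ends (Suc i) (w k) = W"
    using nested_sets[OF long, of "Suc i"] by blast
  have "ends (Suc i) (w k) = ends (Suc i) (w ?k)"
    using bspec[OF W k0] bspec[OF W k1] by (simp only:)
  hence "take (Suc i) (w k) = take (Suc i) (w ?k)" "take (Suc i) (rev (w k)) = take (Suc i) (rev (w ?k))"
    by (simp_all add: ends_def)
  hence "w k ! i = w ?k ! i" "rev (w k) ! i = rev (w ?k) ! i" by (metis lessI nth_take)+
  thus "limit_word w (int i) = rev (w k) ! i" "limit_word w (- int i - 1) = w k ! i"
    by (simp_all add: limit_word_def)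
qed

lemma limit_word_windows:
  fixes w :: "nat \<Rightarrow> 'a::finite list"
  assumes long: "\<And>N. \<forall>\<^sub>F k in sequentially. N \<le> length (w k)"
  shows "infinite {k. n \<le> length (w k)
           \<and> drop (length (w k) - n) (w k) = rev (map (\<lambda>i. limit_word w (int i)) [0..<n])
           \<and> take n (w k) = rev (map (\<lambda>i. limit_word w (- int n + int i)) [0..<n])}"
proof (rule infinite_super)
  show "infinite (nested_sets w n)" using nested_sets[OF long] by blast
  show "nested_sets w n \<subseteq> {k. n \<le> length (w k)
           \<and> drop (length (w k) - n) (w k) = rev (map (\<lambda>i. limit_word w (int i)) [0..<n])
           \<and> take n (w k) = rev (map (\<lambda>i. limit_word w (- int n + int i)) [0..<n])}"
  proof safe
    fix k assume k: "k \<in> nested_sets w n"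
    show len: "n \<le> length (w k)" using nested_sets[OF long, of n] k by blast
    have "map (\<lambda>i. limit_word w (int i)) [0..<n] = take n (rev (w k))"
      by (rule nth_equalityI) (use len limit_word_nth(1)[OF long k] in auto)
    thus "drop (length (w k) - n) (w k) = rev (map (\<lambda>i. limit_word w (int i)) [0..<n])"
      by (simp add: rev_take)
    have "map (\<lambda>i. limit_word w (- int n + int i)) [0..<n] = rev (take n (w k))"
    proof (rule nth_equalityI)
      fix i assume "i < length (map (\<lambda>i. limit_word w (- int n + int i)) [0..<n])"
      hence i: "i < n" by simp
      have "- int n + int i = - int (n - 1 - i) - 1" using i by simp
      hence "limit_word w (- int n + int i) = w k ! (n - 1 - i)"
        using limit_word_nth(2)[OF long k, of "n - 1 - i"] i by simp
      thus "map (\<lambda>i. limit_word w (- int n + int i)) [0..<n] ! i = rev (take n (w k)) ! i"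
        using i len by (simp add: rev_nth)
    qed (use len in simp)
    thus "take n (w k) = rev (map (\<lambda>i. limit_word w (- int n + int i)) [0..<n])" by simp
  qed
qed

section \<open>Words of diverging length\<close>

lemma ratio_tendsto_zero_if_sin_dist_le:
  fixes D E \<theta> :: real
  assumes u: "norm u = 1" and G: "\<And>n. invertible (G n)"
    and ratio: "\<And>n. sv_ratio (G n) \<le> D * \<theta>^n"
    and dist: "\<And>n. sin_dist u (least_dir (G n)) \<le> E * \<theta>^n" and "0 \<le> \<theta>" "\<theta> < 1"
  shows "(\<lambda>n. norm (G n *v u) / sv1 (G n)) \<longlonglongrightarrow> 0"
proof (rule Lim_null_comparison[OF always_eventually])
  show "(\<lambda>n. (D + E) * \<theta>^n) \<longlonglongrightarrow> 0"
    using assms by (intro tendsto_mult_right_zero LIMSEQ_power_zero) auto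
  show "\<forall>n. norm (norm (G n *v u) / sv1 (G n)) \<le> (D + E) * \<theta>^n"
  proof
    fix n
    have "norm (G n *v u) / sv1 (G n) \<le> sv_ratio (G n) + sin_dist u (least_dir (G n))"
      by (rule ratio_le_sin_dist[OF u G])
    also have "\<dots> \<le> (D + E) * \<theta>^n" using ratio[of n] dist[of n] by (simp add: algebra_simps)
    finally show "norm (norm (G n *v u) / sv1 (G n)) \<le> (D + E) * \<theta>^n" by (simp add: sv1_nonneg)
  qed
qed

lemma frequently_sequentially_if_infinite: "infinite {k. P k} \<Longrightarrow> \<exists>\<^sub>F k in sequentially. P k"
  by (simp add: cofinite_eq_sequentially[symmetric] frequently_cofinite)

context dominated_family
begin

lemma sin_dist_least_dir_suffix:
  assumes "n \<le> length xs" "norm u = 1"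
  shows "sin_dist u (least_dir (word_prod A (drop (length xs - n) xs)))
    \<le> norm (word_prod A xs *v u) / sv1 (word_prod A xs) + cond_max * (C * \<tau>^n / (1 - \<tau>))"
proof -
  let ?L = "length xs"
  let ?G = "\<lambda>i. word_prod A (drop (?L - i) xs)"
  have "?G (Suc i) = A (xs ! (?L - Suc i)) ** ?G i" if "i < ?L" for i
  proof -
    have "drop (?L - Suc i) xs = xs ! (?L - Suc i) # drop (Suc (?L - Suc i)) xs"
      using that by (simp add: Cons_nth_drop_Suc)
    moreover have "Suc (?L - Suc i) = ?L - i" using that by simp
    ultimately show ?thesis by simp
  qed
  moreover have "sv_ratio (?G i) \<le> C * \<tau>^i" if "i < ?L" for i
    using sv_ratio_word_prod[of "drop (?L - i) xs"] that by simp
  ultimately have "sin_dist u (least_dir (?G n)) \<le> norm (?G ?L *v u) / sv1 (?G ?L) + cond_max * (C * \<tau>^n / (1 - \<tau>))"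
    by (intro sin_dist_least_dir_le[where B = "\<lambda>i. A (xs ! (?L - Suc i))"])
       (use assms \<tau> C_pos cond_max_nonneg in \<open>auto simp: cond_le_cond_max invertible_A invertible_word_prod\<close>)
  thus ?thesis by simp
qed

lemma sin_dist_least_dir_prefix_inv:
  assumes "n \<le> length xs" "norm u = 1"
  shows "sin_dist u (least_dir (matrix_inv (word_prod A (take n xs))))
    \<le> norm (matrix_inv (word_prod A xs) *v u) / sv1 (matrix_inv (word_prod A xs))
       + cond_max * (C * \<tau>^n / (1 - \<tau>))"
proof -
  let ?L = "length xs"
  let ?G = "\<lambda>i. matrix_inv (word_prod A (take i xs))"
  have "?G (Suc i) = matrix_inv (A (xs ! i)) ** ?G i" if "i < ?L" for i
    using that by (simp add: take_Suc_conv_app_nth word_prod_append matrix_inv_mult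
        invertible_A invertible_word_prod)
  moreover have "sv_ratio (?G i) \<le> C * \<tau>^i" if "i < ?L" for i
    using sv_ratio_word_prod[of "take i xs"] that
    by (simp add: sv_ratio_matrix_inv invertible_A invertible_word_prod)
  ultimately have "sin_dist u (least_dir (?G n)) \<le> norm (?G ?L *v u) / sv1 (?G ?L) + cond_max * (C * \<tau>^n / (1 - \<tau>))"
    by (intro sin_dist_least_dir_le[where B = "\<lambda>i. matrix_inv (A (xs ! i))"])
       (use assms \<tau> C_pos cond_max_nonneg in \<open>auto simp: cond_matrix_inv_le_cond_max
         invertible_matrix_inv invertible_A invertible_word_prod\<close>)
  thus ?thesis by simp
qed

text \<open>Passing to the limit word gives a vector that is stable and unstable at time 0.\<close>
lemma no_stable_unstable_limit:
  fixes w :: "nat \<Rightarrow> 'n list"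
  assumes long: "\<And>N. \<forall>\<^sub>F k in sequentially. N \<le> length (w k)" and u: "norm u = 1"
    and stable: "(\<lambda>k. norm (word_prod A (w k) *v u) / sv1 (word_prod A (w k))) \<longlonglongrightarrow> 0"
    and unstable: "(\<lambda>k. norm (matrix_inv (word_prod A (w k)) *v u)
                      / sv1 (matrix_inv (word_prod A (w k)))) \<longlonglongrightarrow> 0"
  shows False
proof -
  let ?\<omega> = "limit_word w" and ?E = "cond_max * C / (1 - \<tau>)"
  have lim: "(\<lambda>k. a k + cond_max * (C * \<tau>^n / (1 - \<tau>))) \<longlonglongrightarrow> cond_max * (C * \<tau>^n / (1 - \<tau>))"
    if "a \<longlonglongrightarrow> 0" for a :: "nat \<Rightarrow> real" and n
    using tendsto_add[OF that tendsto_const] by simp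
  have windows: "\<exists>\<^sub>F k in sequentially. n \<le> length (w k)
      \<and> drop (length (w k) - n) (w k) = rev (map (\<lambda>i. ?\<omega> (int i)) [0..<n])
      \<and> take n (w k) = rev (map (\<lambda>i. ?\<omega> (- int n + int i)) [0..<n])" for n
    by (rule frequently_sequentially_if_infinite[OF limit_word_windows[OF long]])
  have "stable_at A ?\<omega> 0 u"
    unfolding stable_at_def
  proof (rule ratio_tendsto_zero_if_sin_dist_le[OF u cocycle_invertible sv_ratio_cocycle_le])
    fix n
    have "sin_dist u (least_dir (cocycle A ?\<omega> 0 n)) \<le> cond_max * (C * \<tau>^n / (1 - \<tau>))"
      by (rule frequently_le_tendsto_imp_le[OF lim[OF stable], of _ n], rule frequently_mono[OF _ windows[of n]])
         (auto dest!: sin_dist_least_dir_suffix[OF _ u] simp: cocycle_eq_word_prod)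
    thus "sin_dist u (least_dir (cocycle A ?\<omega> 0 n)) \<le> ?E * \<tau>^n" by simp
  qed (use \<tau> in auto)
  moreover have "unstable_at A ?\<omega> 0 u"
    unfolding unstable_at_def
  proof (rule ratio_tendsto_zero_if_sin_dist_le[OF u])
    fix n
    show "sv_ratio (matrix_inv (cocycle A ?\<omega> (0 - int n) n)) \<le> C * \<tau>^n"
      by (simp add: sv_ratio_matrix_inv sv_ratio_cocycle_le)
    have "sin_dist u (least_dir (matrix_inv (cocycle A ?\<omega> (- int n) n))) \<le> cond_max * (C * \<tau>^n / (1 - \<tau>))"
      by (rule frequently_le_tendsto_imp_le[OF lim[OF unstable], of _ n], rule frequently_mono[OF _ windows[of n]])
         (auto dest!: sin_dist_least_dir_prefix_inv[OF _ u] simp: cocycle_eq_word_prod)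
    thus "sin_dist u (least_dir (matrix_inv (cocycle A ?\<omega> (0 - int n) n))) \<le> ?E * \<tau>^n" by simp
  qed (use \<tau> in \<open>auto intro: invertible_matrix_inv\<close>)
  moreover have "u \<noteq> 0" using u by auto
  ultimately show False using no_stable_unstable_vector by blast
qed

end

section \<open>Two-by-two matrix identities\<close>

lemma trace_2: "trace (G::'a::comm_ring_1^2^2) = G$1$1 + G$2$2"
  by (simp add: trace_def UNIV_2)

lemma det_scaleR_2: "det (c *\<^sub>R G) = c\<^sup>2 * det (G::real^2^2)"
  by (simp add: det_2 algebra_simps power2_eq_square)

lemma cayley_hamilton_2: "G ** G = trace G *\<^sub>R G - det G *\<^sub>R mat 1" for G :: "real^2^2"
  unfolding mat2_eq_iff matrix_matrix_mult_2 by (simp add: trace_2 det_2 mat_def algebra_simps)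

definition adjugate2 :: "real^2^2 \<Rightarrow> real^2^2" where
  "adjugate2 G = trace G *\<^sub>R mat 1 - G"

lemma adjugate2_mult: "adjugate2 G ** G = det G *\<^sub>R mat 1"
  unfolding mat2_eq_iff matrix_matrix_mult_2 adjugate2_def by (simp add: trace_2 det_2 mat_def algebra_simps)

lemma matrix_inv_eq_adjugate2: "invertible G \<Longrightarrow> matrix_inv G = (1 / det G) *\<^sub>R adjugate2 G"
  by (rule matrix_inv_unique[symmetric])
     (simp_all add: scalar_matrix_assoc[symmetric] adjugate2_mult invertible_det_nz)

lemma adjugate2_scaleR: "adjugate2 (c *\<^sub>R G) = c *\<^sub>R adjugate2 G"
  by (simp add: adjugate2_def trace_2 mat2_eq_iff mat_def algebra_simps)

lemma tendsto_adjugate2: "X \<longlonglongrightarrow> M \<Longrightarrow> (\<lambda>k. adjugate2 (X k)) \<longlonglongrightarrow> adjugate2 M"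
  unfolding adjugate2_def trace_2 by (intro tendsto_intros tendsto_vec_nth)

lemma mat_pow_0 [simp]: "mat_pow M 0 = mat 1"
  and mat_pow_Suc [simp]: "mat_pow M (Suc k) = M ** mat_pow M k"
  by (simp_all add: mat_pow_def)

lemma mat_pow_Suc_if_det_0:
  assumes "det M = 0"
  shows "mat_pow M (Suc j) = trace M ^ j *\<^sub>R (M::real^2^2)"
proof (induction j)
  case (Suc j)
  have "mat_pow M (Suc (Suc j)) = trace M ^ j *\<^sub>R (M ** M)"
    by (simp only: mat_pow_Suc[of M "Suc j"] Suc.IH matrix_scalar_ac scalar_matrix_assoc[symmetric])
  thus ?case using cayley_hamilton_2[of M] assms by simp
qed simp

lemma nilpotent_2x2_det_trace:
  assumes "nilpotent_mat (M::real^2^2)" "M \<noteq> 0"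
  shows "det M = 0" "trace M = 0"
proof -
  obtain k where k: "mat_pow M k = 0" using assms(1) by (auto simp: nilpotent_mat_def)
  have "(mat 1 :: real^2^2) $ 1 $ 1 \<noteq> 0" by (simp add: mat_def)
  hence "mat 1 \<noteq> (0::real^2^2)" by auto
  then obtain j where j: "k = Suc j" using k by (cases k) auto
  have "det M ^ k = det (mat_pow M k)"
    by (induction k) (simp_all add: det_mul)
  thus det: "det M = 0" using k by (simp add: det_2)
  have "trace M ^ j *\<^sub>R M = 0" using k mat_pow_Suc_if_det_0[OF det, of j] j by simp
  thus "trace M = 0" using assms(2) by simp
qed

lemma nilpotent_if_square_0: "M ** M = 0 \<Longrightarrow> nilpotent_mat M"
  unfolding nilpotent_mat_def by (intro exI[of _ 2]) (simp add: numeral_2_eq_2)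

lemma rank_one_2x2_eq_scaled_idempotent:
  fixes M :: "real^2^2"
  assumes rank: "rank M = 1" and "\<not> nilpotent_mat M"
  shows "\<exists>c P. c \<noteq> 0 \<and> P ** P = P \<and> rank P = 1 \<and> M = c *\<^sub>R P"
proof -
  have det: "det M = 0" using rank by (simp add: det_eq_0_rank)
  hence square: "M ** M = trace M *\<^sub>R M" using cayley_hamilton_2[of M] by simp
  have t: "trace M \<noteq> 0" using assms(2) square nilpotent_if_square_0 by force
  let ?P = "(1 / trace M) *\<^sub>R M"
  have "?P ** ?P = ?P" using t by (simp add: scalar_matrix_assoc[symmetric] matrix_scalar_ac square)
  moreover have "rank ?P = 1"
  proof -
    have "rank ?P < 2" using det det_eq_0_rank[of ?P] by (simp add: det_scaleR_2)
    moreover have "M \<noteq> 0" using rank by auto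
    hence "rank ?P \<noteq> 0" using t by (simp add: rank_eq_0)
    ultimately show ?thesis by linarith
  qed
  moreover have "M = trace M *\<^sub>R ?P" using t by simp
  ultimately show ?thesis using t by blast
qed

section \<open>Nilpotent limits\<close>

lemma tendsto_matrix_vector_mult:
  fixes X :: "nat \<Rightarrow> real^'n^'m"
  assumes "X \<longlonglongrightarrow> M"
  shows "(\<lambda>k. X k *v v) \<longlonglongrightarrow> M *v v"
proof -
  have "linear (\<lambda>X::real^'n^'m. X *v v)"
    by (rule linearI) (simp_all add: matrix_vector_mult_add_rdistrib scaleR_matrix_vector_assoc)
  hence "bounded_linear (\<lambda>X::real^'n^'m. X *v v)" by (simp add: linear_conv_bounded_linear)
  from bounded_linear.tendsto[OF this assms] show ?thesis .
qed

text \<open>If the limit N kills u but not the unit vector y, then Y k *v u becomes negligible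
  compared with Y k *v y, and hence with sv1 (Y k).\<close>
lemma ratio_tendsto_zero_at_kernel:
  assumes Y: "Y \<longlonglongrightarrow> (N::real^2^2)" and Nu: "N *v u = 0" and Ny: "N *v y \<noteq> 0" and y: "norm y = 1"
  shows "(\<lambda>k. norm (Y k *v u) / sv1 (Y k)) \<longlonglongrightarrow> 0"
proof (rule Lim_null_comparison)
  have b: "(\<lambda>k. norm (Y k *v y)) \<longlonglongrightarrow> norm (N *v y)" by (intro tendsto_norm tendsto_matrix_vector_mult Y)
  have "(\<lambda>k. norm (Y k *v u) / norm (Y k *v y)) \<longlonglongrightarrow> norm (N *v u) / norm (N *v y)"
    using Ny by (intro tendsto_divide tendsto_norm tendsto_matrix_vector_mult Y b) simp
  thus "(\<lambda>k. norm (Y k *v u) / norm (Y k *v y)) \<longlonglongrightarrow> 0" using Nu by simp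
  have "\<forall>\<^sub>F k in sequentially. 0 < norm (Y k *v y)" using order_tendstoD(1)[OF b, of 0] Ny by simp
  thus "\<forall>\<^sub>F k in sequentially. norm (norm (Y k *v u) / sv1 (Y k)) \<le> norm (Y k *v u) / norm (Y k *v y)"
  proof eventually_elim
    case (elim k)
    have le: "norm (Y k *v y) \<le> sv1 (Y k)" using norm_mv_le_sv1[of "Y k" y] y by simp
    have "norm (Y k *v u) / sv1 (Y k) \<le> norm (Y k *v u) / norm (Y k *v y)"
      by (rule divide_left_mono[OF le norm_ge_zero mult_pos_pos[OF less_le_trans[OF elim le] elim]])
    thus ?case by (simp add: sv1_nonneg)
  qed
qed

lemma ratio_scaleR: "c \<noteq> 0 \<Longrightarrow> norm ((c *\<^sub>R Y) *v u) / sv1 (c *\<^sub>R Y) = norm (Y *v u) / sv1 Y"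
  by (simp add: scaleR_matrix_vector_assoc[symmetric] sv1_scaleR)

lemma ratio_adjugate2_scaleR:
  assumes "invertible G" "c \<noteq> 0"
  shows "norm (adjugate2 (c *\<^sub>R G) *v u) / sv1 (adjugate2 (c *\<^sub>R G))
    = norm (matrix_inv G *v u) / sv1 (matrix_inv G)"
proof -
  have "det G \<noteq> 0" using assms(1) by (simp add: invertible_det_nz)
  hence "adjugate2 (c *\<^sub>R G) = (c * det G) *\<^sub>R matrix_inv G"
    by (simp add: adjugate2_scaleR matrix_inv_eq_adjugate2 assms(1))
  thus ?thesis using assms(2) \<open>det G \<noteq> 0\<close> by (simp add: ratio_scaleR)
qed

lemma closure_scaled_word_prods_cases:
  fixes A :: "'n::finite \<Rightarrow> real^'d^'d"
  assumes "M \<in> closure {c *\<^sub>R word_prod A w | c w. True}"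
  obtains a v where "M = a *\<^sub>R word_prod A v"
  | c w where "\<And>N. \<forall>\<^sub>F k in sequentially. N \<le> length (w k)"
      "(\<lambda>k. c k *\<^sub>R word_prod A (w k)) \<longlonglongrightarrow> M"
proof -
  obtain X where X: "\<And>k. X k \<in> {c *\<^sub>R word_prod A w | c w. True}" "X \<longlonglongrightarrow> M"
    using assms unfolding closure_sequential by blast
  have "\<forall>k. \<exists>p. X k = fst p *\<^sub>R word_prod A (snd p)" using X(1) by force
  from choice[OF this] obtain p where p: "\<And>k. X k = fst (p k) *\<^sub>R word_prod A (snd (p k))" by blast
  define c where "c k = fst (p k)" for k
  define w where "w k = snd (p k)" for k
  have "X = (\<lambda>k. c k *\<^sub>R word_prod A (w k))" by (intro ext) (simp add: p c_def w_def)
  with X(2) have X: "(\<lambda>k. c k *\<^sub>R word_prod A (w k)) \<longlonglongrightarrow> M" by simp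
  show ?thesis
  proof (cases "\<forall>N. \<forall>\<^sub>F k in sequentially. N \<le> length (w k)")
    case True
    with X that(2) show ?thesis by blast
  next
    case False
    then obtain N where "\<exists>\<^sub>F k in sequentially. length (w k) < N"
      by (auto simp: not_eventually not_le)
    hence "infinite {k. length (w k) < N}"
      by (simp add: cofinite_eq_sequentially[symmetric] frequently_cofinite)
    moreover have "finite (w ` {k. length (w k) < N})"
      by (rule finite_subset[OF _ finite_lists_length_le[of UNIV N]]) auto
    ultimately obtain v where "infinite (w -` {v} \<inter> {k. length (w k) < N})"
      using inf_img_fin_dom' by blast
    hence v: "infinite {k. w k = v}" by (rule infinite_super[rotated]) auto
    let ?T = "range (\<lambda>a. a *\<^sub>R word_prod A v)"
    have "closed ?T" using closed_span[of "{word_prod A v}"] by (simp add: span_singleton)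
    moreover have "\<exists>\<^sub>F k in sequentially. c k *\<^sub>R word_prod A (w k) \<in> ?T"
      by (rule frequently_mono[OF _ frequently_sequentially_if_infinite[OF v]]) auto
    ultimately have "M \<in> ?T"
      using topological_tendstoD[OF X, of "- ?T"] by (auto simp: frequently_def)
    with that(1) show ?thesis by blast
  qed
qed

lemma exists_unit_not_in_kernel:
  assumes "(M::real^'n^'m) \<noteq> 0"
  obtains y where "norm y = 1" "M *v y \<noteq> 0"
proof -
  obtain x where x: "M *v x \<noteq> 0" using assms matrix_eq[of M 0] by auto
  hence "x \<noteq> 0" by auto
  with x show ?thesis
    by (intro that[of "(1 / norm x) *\<^sub>R x"]) (simp_all add: matrix_vector_mult_scaleR)
qed

lemma dominated_family_if_dominated:
  fixes A :: "'n::finite \<Rightarrow> real^2^2"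
  assumes GL: "\<And>i. invertible (A i)" and dom: "dominated A"
  obtains C \<tau> where "dominated_family A C \<tau>"
proof -
  obtain C \<tau> where C: "C > 0" "0 < \<tau>" "\<tau> < 1"
    and bound: "\<And>w. sv2 (word_prod A w) \<le> C * \<tau> ^ length w * sv1 (word_prod A w)"
    using dom unfolding dominated_def by blast
  have "sv_ratio (word_prod A w) \<le> C * \<tau> ^ length w" for w
    using bound[of w] sv1_pos[OF invertible_word_prod[of A, OF GL]] by (simp add: sv_ratio_def pos_divide_le_eq)
  with GL C have "dominated_family A C \<tau>" by unfold_locales auto
  thus ?thesis by (rule that)
qed

context dominated_family
begin

text \<open>The range of N equals its kernel, spanned by some u. Then u is asymptotically contracted
  by the products, and, since adjugate2 N = -N, also by their inverses, which are proportional
  to the adjugates.\<close>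
lemma nilpotent_limit_eq_0:
  assumes long: "\<And>N. \<forall>\<^sub>F k in sequentially. N \<le> length (w k)"
    and lim: "(\<lambda>k. c k *\<^sub>R word_prod A (w k)) \<longlonglongrightarrow> N"
    and det: "det N = 0" and tr: "trace N = 0"
  shows "N = 0"
proof (rule ccontr)
  assume "N \<noteq> 0"
  obtain y where y: "norm y = 1" "N *v y \<noteq> 0" using exists_unit_not_in_kernel[OF \<open>N \<noteq> 0\<close>] .
  let ?u = "(1 / norm (N *v y)) *\<^sub>R (N *v y)"
  have u: "norm ?u = 1" using y(2) by simp
  have "N ** N = 0" using cayley_hamilton_2[of N] det tr by simp
  hence Nu: "N *v ?u = 0" by (simp add: matrix_vector_mult_scaleR matrix_vector_mul_assoc)
  have "adjugate2 N = - N" using tr by (simp add: adjugate2_def)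
  hence adj: "adjugate2 N *v x = - (N *v x)" for x
    by (simp add: vec_eq_iff matrix_vector_mult_def sum_negf)
  have c: "\<forall>\<^sub>F k in sequentially. c k \<noteq> 0"
    using tendsto_imp_eventually_ne[OF lim \<open>N \<noteq> 0\<close>] by eventually_elim auto
  have "(\<lambda>k. norm (word_prod A (w k) *v ?u) / sv1 (word_prod A (w k))) \<longlonglongrightarrow> 0"
    using ratio_tendsto_zero_at_kernel[OF lim Nu y(2,1)]
    by (rule Lim_transform_eventually) (use c in \<open>eventually_elim, simp add: ratio_scaleR\<close>)
  moreover have "(\<lambda>k. norm (adjugate2 (c k *\<^sub>R word_prod A (w k)) *v ?u)
      / sv1 (adjugate2 (c k *\<^sub>R word_prod A (w k)))) \<longlonglongrightarrow> 0"
    by (rule ratio_tendsto_zero_at_kernel[OF tendsto_adjugate2[OF lim], of _ y]) (simp_all add: adj Nu y)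
  hence "(\<lambda>k. norm (matrix_inv (word_prod A (w k)) *v ?u)
      / sv1 (matrix_inv (word_prod A (w k)))) \<longlonglongrightarrow> 0"
    by (rule Lim_transform_eventually) (use c in \<open>eventually_elim, simp add: ratio_adjugate2_scaleR\<close>)
  ultimately show False by (rule no_stable_unstable_limit[OF long u])
qed

theorem nilpotent_in_closure_eq_0:
  assumes M: "M \<in> closure {c *\<^sub>R word_prod A w | c w. True}" and nil: "nilpotent_mat M"
  shows "M = 0"
proof (rule ccontr)
  assume "M \<noteq> 0"
  with nil have det: "det M = 0" and tr: "trace M = 0" using nilpotent_2x2_det_trace by auto
  from M show False
  proof (cases rule: closure_scaled_word_prods_cases)
    case (1 a v)
    have "a\<^sup>2 * det (word_prod A v) = 0" using det 1 by (simp add: det_scaleR_2)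
    hence "a = 0" using word_prod_invertible[of v] by (simp add: invertible_det_nz)
    with 1 \<open>M \<noteq> 0\<close> show False by simp
  next
    case (2 c w)
    with det tr \<open>M \<noteq> 0\<close> show False using nilpotent_limit_eq_0 by blast
  qed
qed

end

theorem mainTheorem9:
  fixes A :: "'n::finite \<Rightarrow> real^2^2"
  assumes GL: "\<And>i. invertible (A i)"
    and dom: "dominated A"
  shows "(\<forall>M \<in> closure {c *\<^sub>R word_prod A w | c w. True}.
            nilpotent_mat M \<longrightarrow> M = 0)
       \<and> (\<forall>M \<in> closure {c *\<^sub>R word_prod A w | c w. True}.
            rank M = 1 \<longrightarrow>
              (\<exists>c P. c \<noteq> 0 \<and> P ** P = P \<and> rank P = 1 \<and> M = c *\<^sub>R P))"
proof -
  obtain C \<tau> where "dominated_family A C \<tau>" using dominated_family_if_dominated[OF GL dom] .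
  then interpret dominated_family A C \<tau> .
  have rank_one: "\<exists>c P. c \<noteq> 0 \<and> P ** P = P \<and> rank P = 1 \<and> M = c *\<^sub>R P"
    if "M \<in> closure {c *\<^sub>R word_prod A w | c w. True}" "rank M = 1" for M
  proof (rule rank_one_2x2_eq_scaled_idempotent[OF that(2)])
    show "\<not> nilpotent_mat M" using nilpotent_in_closure_eq_0[OF that(1)] that(2) by auto
  qed
  show ?thesis using nilpotent_in_closure_eq_0 rank_one by blast
qed

end
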